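(* For every $n\ge1$, the reflexive $n$-path graph $I_n$ and the terminal graph $K^1$, regarded as simplicial complexes, are cofibrant in the Thomason model structure on $\mathbf{Cpx}$, and the inclusion $K^1\hookrightarrow I_n$ of the terminal graph as an endpoint of $I_n$ is a Thomason cofibration.
   Context: A simplicial complex consists of a vertex set and a collection of nonempty finite subsets (simplices) containing all singletons and closed under nonempty subsets; maps are vertex functions preserving simplices; $\mathbf{Cpx}$ is the category. Reflexive graphs are the complexes whose simplices have at most two elements. $I_n$ has vertices $0,\dots,n$ and edges $\{i,i+1\}$; $K^1$ is the one-vertex graph. $\mathbf{\Delta}^n$ is the complex on $\{0,\dots,n\}$ with all nonempty subsets simplices, $\mathrm{Sing}(K)_n=\mathbf{Cpx}(\mathbf{\Delta}^n,K)$, $\mathrm{Ex}$ is the right adjoint of barycentric subdivision. Thomason model structure on $\mathbf{Cpx}$: $f$ is a weak equivalence iff $\mathrm{Sing}(f)$ is a weak homotopy equivalence, a fibration iff $\mathrm{Ex}^2\mathrm{Sing}(f)$ is a Kan fibration, and a cofibration iff it has the left lifting property against all trivial fibrations. *)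

theory Defs
  imports "HOL-Analysis.Analysis" "HOL-Homology.Homology"
begin

text \<open>A monotone map theta : [m] -> [n] (only its values on 0..m matter).\<close>
definition mono_op :: "nat \<Rightarrow> nat \<Rightarrow> (nat \<Rightarrow> nat) \<Rightarrow> bool" where
  "mono_op m n \<theta> \<longleftrightarrow> (\<forall>i\<le>m. \<theta> i \<le> n) \<and> (\<forall>i j. i \<le> j \<and> j \<le> m \<longrightarrow> \<theta> i \<le> \<theta> j)"

text \<open>A simplicial set: levels X_n (pairwise disjoint, a harmless representation convention)
  and the contravariant action: act n m theta x = theta^* x for x in X_n, theta : [m] -> [n].\<close>
record 'a sset =
  lev :: "nat \<Rightarrow> 'a set"
  act :: "nat \<Rightarrow> nat \<Rightarrow> (nat \<Rightarrow> nat) \<Rightarrow> 'a \<Rightarrow> 'a"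

definition is_sset :: "'a sset \<Rightarrow> bool" where
  "is_sset X \<longleftrightarrow>
     (\<forall>m n. m \<noteq> n \<longrightarrow> lev X m \<inter> lev X n = {}) \<and>
     (\<forall>n m \<theta> x. mono_op m n \<theta> \<and> x \<in> lev X n \<longrightarrow> act X n m \<theta> x \<in> lev X m) \<and>
     (\<forall>n x. x \<in> lev X n \<longrightarrow> act X n n id x = x) \<and>
     (\<forall>n m \<theta> \<theta>' x. mono_op m n \<theta> \<and> x \<in> lev X n \<and> (\<forall>i\<le>m. \<theta> i = \<theta>' i)
        \<longrightarrow> act X n m \<theta> x = act X n m \<theta>' x) \<and>
     (\<forall>n m k \<theta> \<psi> x. mono_op m n \<theta> \<and> mono_op k m \<psi> \<and> x \<in> lev X n
        \<longrightarrow> act X n k (\<theta> \<circ> \<psi>) x = act X m k \<psi> (act X n m \<theta> x))"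

definition smap :: "'a sset \<Rightarrow> 'b sset \<Rightarrow> ('a \<Rightarrow> 'b) \<Rightarrow> bool" where
  "smap X Y f \<longleftrightarrow> (\<forall>n x. x \<in> lev X n \<longrightarrow> f x \<in> lev Y n \<and>
      (\<forall>m \<theta>. mono_op m n \<theta> \<longrightarrow> f (act X n m \<theta> x) = act Y n m \<theta> (f x)))"

definition coface :: "nat \<Rightarrow> nat \<Rightarrow> nat" where
  "coface i = (\<lambda>j. if j < i then j else Suc j)"

definition face :: "'a sset \<Rightarrow> nat \<Rightarrow> nat \<Rightarrow> 'a \<Rightarrow> 'a" where
  "face X n i x = act X n (n - 1) (coface i) x"

text \<open>Kan fibration: right lifting property against all horn inclusions
  Lambda^n_k -> Delta^n (n >= 1); a map from the horn is a compatible family of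
  (n-1)-simplices y_i, i /= k, with d_i y_j = d_(j-1) y_i for i < j.\<close>
definition kan_fib :: "'a sset \<Rightarrow> 'b sset \<Rightarrow> ('a \<Rightarrow> 'b) \<Rightarrow> bool" where
  "kan_fib E B p \<longleftrightarrow> smap E B p \<and>
     (\<forall>n k y b. 1 \<le> n \<and> k \<le> n \<and>
        (\<forall>i\<le>n. i \<noteq> k \<longrightarrow> y i \<in> lev E (n - 1)) \<and>
        (\<forall>i j. i < j \<and> j \<le> n \<and> i \<noteq> k \<and> j \<noteq> k \<longrightarrow>
            face E (n - 1) i (y j) = face E (n - 1) (j - 1) (y i)) \<and>
        b \<in> lev B n \<and> (\<forall>i\<le>n. i \<noteq> k \<longrightarrow> face B n i b = p (y i))
      \<longrightarrow> (\<exists>z\<in>lev E n. p z = b \<and> (\<forall>i\<le>n. i \<noteq> k \<longrightarrow> face E n i z = y i)))"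

text \<open>theta_* : Delta^m -> Delta^n on barycentric coordinates.\<close>
definition simplex_push :: "nat \<Rightarrow> (nat \<Rightarrow> nat) \<Rightarrow> (nat \<Rightarrow> real) \<Rightarrow> (nat \<Rightarrow> real)" where
  "simplex_push m \<theta> t = (\<lambda>j. \<Sum>i\<in>{i. i \<le> m \<and> \<theta> i = j}. t i)"

definition real_base :: "'a sset \<Rightarrow> (nat \<times> ('a \<times> (nat \<Rightarrow> real))) topology" where
  "real_base X = sum_topology
     (\<lambda>n. prod_topology (discrete_topology (lev X n))
            (subtopology (powertop_real UNIV) (standard_simplex n))) UNIV"

definition real_rel :: "'a sset \<Rightarrow> ((nat \<times> ('a \<times> (nat \<Rightarrow> real))) \<times> (nat \<times> ('a \<times> (nat \<Rightarrow> real)))) set" where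
  "real_rel X = {((m, (act X n m \<theta> x, t)), (n, (x, simplex_push m \<theta> t))) | n m \<theta> x t.
       mono_op m n \<theta> \<and> x \<in> lev X n \<and> t \<in> standard_simplex m}"

definition real_eq :: "'a sset \<Rightarrow> ((nat \<times> ('a \<times> (nat \<Rightarrow> real))) \<times> (nat \<times> ('a \<times> (nat \<Rightarrow> real)))) set" where
  "real_eq X = (real_rel X \<union> (real_rel X)\<inverse>)\<^sup>*"

definition quotient_top :: "'p topology \<Rightarrow> ('p \<times> 'p) set \<Rightarrow> 'p set topology" where
  "quotient_top T E = topology (\<lambda>U. U \<subseteq> topspace T // E \<and>
      openin T {y \<in> topspace T. E `` {y} \<in> U})"

definition realize :: "'a sset \<Rightarrow> (nat \<times> ('a \<times> (nat \<Rightarrow> real))) set topology" where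
  "realize X = quotient_top (real_base X) (real_eq X)"

definition realize_map :: "'b sset \<Rightarrow> ('a \<Rightarrow> 'b) \<Rightarrow> (nat \<times> ('a \<times> (nat \<Rightarrow> real))) set \<Rightarrow> (nat \<times> ('b \<times> (nat \<Rightarrow> real))) set" where
  "realize_map Y f U = real_eq Y `` ((\<lambda>(n, x, t). (n, (f x, t))) ` U)"

definition sphere_base :: "nat \<Rightarrow> real" where
  "sphere_base = (\<lambda>i. if i = 0 then 1 else 0)"

text \<open>Weak homotopy equivalence of topological spaces: bijection on pi_0 and on all
  pi_n (n >= 1) at every basepoint (pointed homotopy classes of maps from S^n).\<close>
definition weak_homotopy_equivalence :: "'a topology \<Rightarrow> 'b topology \<Rightarrow> ('a \<Rightarrow> 'b) \<Rightarrow> bool" where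
  "weak_homotopy_equivalence T T' g \<longleftrightarrow> continuous_map T T' g \<and>
     (\<forall>y\<in>topspace T'. \<exists>x\<in>topspace T. path_component_of T' (g x) y) \<and>
     (\<forall>x\<in>topspace T. \<forall>x'\<in>topspace T. path_component_of T' (g x) (g x') \<longrightarrow> path_component_of T x x') \<and>
     (\<forall>n\<ge>1. \<forall>x\<in>topspace T.
        (\<forall>h. continuous_map (nsphere n) T' h \<and> h sphere_base = g x \<longrightarrow>
           (\<exists>k. continuous_map (nsphere n) T k \<and> k sphere_base = x \<and>
                homotopic_with (\<lambda>h'. h' sphere_base = g x) (nsphere n) T' (g \<circ> k) h)) \<and>
        (\<forall>k k'. continuous_map (nsphere n) T k \<and> k sphere_base = x \<and>
                continuous_map (nsphere n) T k' \<and> k' sphere_base = x \<and>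
                homotopic_with (\<lambda>h'. h' sphere_base = g x) (nsphere n) T' (g \<circ> k) (g \<circ> k')
           \<longrightarrow> homotopic_with (\<lambda>h'. h' sphere_base = x) (nsphere n) T k k'))"

definition sset_weq :: "'a sset \<Rightarrow> 'b sset \<Rightarrow> ('a \<Rightarrow> 'b) \<Rightarrow> bool" where
  "sset_weq X Y f \<longleftrightarrow> smap X Y f \<and>
     weak_homotopy_equivalence (realize X) (realize Y) (realize_map Y f)"

text \<open>k-simplices of sd Delta^n = nerve of the poset of nonempty subsets of [n].\<close>
definition sd_chains :: "nat \<Rightarrow> nat \<Rightarrow> nat set list set" where
  "sd_chains n k = {cs. length cs = Suc k \<and> (\<forall>c\<in>set cs. c \<noteq> {} \<and> c \<subseteq> {0..n}) \<and>
      (\<forall>i j. i \<le> j \<and> j \<le> k \<longrightarrow> cs ! i \<subseteq> cs ! j)}"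

definition sd_all :: "nat \<Rightarrow> nat set list set" where
  "sd_all n = (\<Union>k. sd_chains n k)"

definition list_act :: "nat \<Rightarrow> (nat \<Rightarrow> nat) \<Rightarrow> 'x list \<Rightarrow> 'x list" where
  "list_act m \<theta> xs = map (\<lambda>i. xs ! \<theta> i) [0..<Suc m]"

text \<open>(Ex X)_n = simplicial maps sd Delta^n -> X.\<close>
definition Ex :: "'a sset \<Rightarrow> (nat \<times> (nat set list \<Rightarrow> 'a)) sset" where
  "Ex X = \<lparr> lev = (\<lambda>n. {(n', g). n' = n \<and> g \<in> extensional (sd_all n) \<and>
              (\<forall>k cs. cs \<in> sd_chains n k \<longrightarrow> g cs \<in> lev X k) \<and>
              (\<forall>k m \<theta> cs. cs \<in> sd_chains n k \<and> mono_op m k \<theta> \<longrightarrow>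
                  g (list_act m \<theta> cs) = act X k m \<theta> (g cs))}),
           act = (\<lambda>n m \<theta> (n', g). (m, restrict (\<lambda>cs. g (map (\<lambda>c. \<theta> ` c) cs)) (sd_all m))) \<rparr>"

definition Ex_map :: "('a \<Rightarrow> 'b) \<Rightarrow> (nat \<times> (nat set list \<Rightarrow> 'a)) \<Rightarrow> (nat \<times> (nat set list \<Rightarrow> 'b))" where
  "Ex_map f = (\<lambda>(n, g). (n, restrict (f \<circ> g) (sd_all n)))"

type_synonym 'v cpx = "'v set \<times> 'v set set"

definition is_cpx :: "'v cpx \<Rightarrow> bool" where
  "is_cpx K \<longleftrightarrow> snd K \<subseteq> Pow (fst K) \<and> (\<forall>\<sigma>\<in>snd K. \<sigma> \<noteq> {} \<and> finite \<sigma>) \<and>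
     (\<forall>v\<in>fst K. {v} \<in> snd K) \<and> (\<forall>\<sigma>\<in>snd K. \<forall>\<tau>. \<tau> \<noteq> {} \<and> \<tau> \<subseteq> \<sigma> \<longrightarrow> \<tau> \<in> snd K)"

definition cmap :: "'v cpx \<Rightarrow> 'w cpx \<Rightarrow> ('v \<Rightarrow> 'w) \<Rightarrow> bool" where
  "cmap K L f \<longleftrightarrow> (\<forall>v\<in>fst K. f v \<in> fst L) \<and> (\<forall>\<sigma>\<in>snd K. f ` \<sigma> \<in> snd L)"

text \<open>Sing(K)_n = Cpx(Delta^n, K): lists of n+1 vertices spanning a simplex.\<close>
definition Sing :: "'v cpx \<Rightarrow> 'v list sset" where
  "Sing K = \<lparr> lev = (\<lambda>n. {xs. length xs = Suc n \<and> set xs \<in> snd K}),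
              act = (\<lambda>n m \<theta> xs. list_act m \<theta> xs) \<rparr>"

definition Sing_map :: "('v \<Rightarrow> 'w) \<Rightarrow> 'v list \<Rightarrow> 'w list" where
  "Sing_map f = map f"

definition thomason_weq :: "'v cpx \<Rightarrow> 'w cpx \<Rightarrow> ('v \<Rightarrow> 'w) \<Rightarrow> bool" where
  "thomason_weq K L f \<longleftrightarrow> sset_weq (Sing K) (Sing L) (Sing_map f)"

definition thomason_fib :: "'v cpx \<Rightarrow> 'w cpx \<Rightarrow> ('v \<Rightarrow> 'w) \<Rightarrow> bool" where
  "thomason_fib K L f \<longleftrightarrow>
     kan_fib (Ex (Ex (Sing K))) (Ex (Ex (Sing L))) (Ex_map (Ex_map (Sing_map f)))"

definition thomason_trivial_fib :: "'v cpx \<Rightarrow> 'w cpx \<Rightarrow> ('v \<Rightarrow> 'w) \<Rightarrow> bool" where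
  "thomason_trivial_fib K L f \<longleftrightarrow> is_cpx K \<and> is_cpx L \<and> cmap K L f \<and>
     thomason_weq K L f \<and> thomason_fib K L f"

definition llp :: "'a cpx \<Rightarrow> 'x cpx \<Rightarrow> ('a \<Rightarrow> 'x) \<Rightarrow> 'e cpx \<Rightarrow> 'b cpx \<Rightarrow> ('e \<Rightarrow> 'b) \<Rightarrow> bool" where
  "llp A X i E B p \<longleftrightarrow> (\<forall>a b. cmap A E a \<and> cmap X B b \<and> (\<forall>v\<in>fst A. p (a v) = b (i v)) \<longrightarrow>
      (\<exists>h. cmap X E h \<and> (\<forall>v\<in>fst A. h (i v) = a v) \<and> (\<forall>v\<in>fst X. p (h v) = b v)))"

text \<open>Cofibration: LLP against all trivial fibrations E -> B, where the vertex types
  'e, 'b are arbitrary (in the main theorem they are free, hence universally quantified).\<close>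
definition thomason_cofib :: "'e itself \<Rightarrow> 'b itself \<Rightarrow> 'a cpx \<Rightarrow> 'x cpx \<Rightarrow> ('a \<Rightarrow> 'x) \<Rightarrow> bool" where
  "thomason_cofib _ _ A X i \<longleftrightarrow> is_cpx A \<and> is_cpx X \<and> cmap A X i \<and>
     (\<forall>(E::'e cpx) (B::'b cpx) p. thomason_trivial_fib E B p \<longrightarrow> llp A X i E B p)"

definition empty_cpx :: "'v cpx" where
  "empty_cpx = ({}, {})"

definition thomason_cofibrant :: "'e itself \<Rightarrow> 'b itself \<Rightarrow> 'x cpx \<Rightarrow> bool" where
  "thomason_cofibrant te tb X \<longleftrightarrow> thomason_cofib te tb (empty_cpx :: 'x cpx) X (\<lambda>_. undefined)"

definition path_graph :: "nat \<Rightarrow> nat cpx" where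
  "path_graph n = ({0..n}, {{i} | i. i \<le> n} \<union> {{i, Suc i} | i. i < n})"

definition K1 :: "unit cpx" where
  "K1 = ({()}, {{()}})"

end

(*
  A Thomason trivial fibration p : E \<rightarrow> B of simplicial complexes lifts edges and is surjective
  on vertices; hence every path in B lifts, starting at any prescribed vertex of E over either
  endpoint, which is the left lifting property of \<emptyset> \<rightarrow> I_n, \<emptyset> \<rightarrow> K^1 and of both endpoint
  inclusions K^1 \<rightarrow> I_n.

  Edges: Ex^2 Sing p is a Kan fibration.  An edge {p e, b} of B and the vertex e of E give, via the
  last-vertex maps Sing \<rightarrow> Ex^2 Sing, a lifting problem for the horn \<Lambda>^1_0 \<subseteq> \<Delta>^1; evaluated at
  the top flag of sd^2 \<Delta>^1, the filler is an edge {e, v} of E with p v = b.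

  Vertices: |Sing p| is onto path components.  The classes of simplices spanned by the edge-path
  component C of a vertex b form a clopen subset of |Sing B| containing the point b, so some vertex
  of E maps into C, and lifting edges along a path in C reaches b.
*)
theory Submission
  imports Defs
begin

lemma is_cpx_face: "is_cpx K \<Longrightarrow> \<sigma> \<in> snd K \<Longrightarrow> \<tau> \<noteq> {} \<Longrightarrow> \<tau> \<subseteq> \<sigma> \<Longrightarrow> \<tau> \<in> snd K"
  unfolding is_cpx_def by blast

lemma is_cpx_vertex: "is_cpx K \<Longrightarrow> v \<in> fst K \<Longrightarrow> {v} \<in> snd K"
  unfolding is_cpx_def by blast

lemma is_cpx_simplex_vertices: "is_cpx K \<Longrightarrow> \<sigma> \<in> snd K \<Longrightarrow> \<sigma> \<subseteq> fst K"
  unfolding is_cpx_def by blast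

lemma sd_chains_length: "cs \<in> sd_chains n k \<Longrightarrow> length cs = Suc k"
  unfolding sd_chains_def by auto

lemma sd_chains_set: "cs \<in> sd_chains n k \<Longrightarrow> S \<in> set cs \<Longrightarrow> S \<noteq> {} \<and> S \<subseteq> {0..n}"
  unfolding sd_chains_def by auto

lemma sd_chains_nth: "cs \<in> sd_chains n k \<Longrightarrow> i \<le> k \<Longrightarrow> cs ! i \<noteq> {} \<and> cs ! i \<subseteq> {0..n}"
  unfolding sd_chains_def by (auto dest!: nth_mem[of i cs])

lemma sd_all_iff: "cs \<in> sd_all n \<longleftrightarrow> cs \<in> sd_chains n (length cs - 1)"
proof
  assume "cs \<in> sd_all n"
  then obtain k where "cs \<in> sd_chains n k" unfolding sd_all_def by auto
  moreover then have "k = length cs - 1" by (simp add: sd_chains_length)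
  ultimately show "cs \<in> sd_chains n (length cs - 1)" by simp
qed (auto simp: sd_all_def)

lemma sd_all_if_sd_chains: "cs \<in> sd_chains n k \<Longrightarrow> cs \<in> sd_all n"
  unfolding sd_all_def by blast

lemma Max_le_sd_chains:
  assumes "cs \<in> sd_chains n k" "S \<in> set cs"
  shows "Max S \<le> n"
proof -
  have "S \<noteq> {}" "S \<subseteq> {0..n}" using sd_chains_set[OF assms] by auto
  moreover then have "finite S" using finite_subset by blast
  ultimately show ?thesis using Max_in by auto
qed

lemma length_list_act [simp]: "length (list_act m \<theta> xs) = Suc m"
  unfolding list_act_def by simp

lemma nth_list_act: "i \<le> m \<Longrightarrow> list_act m \<theta> xs ! i = xs ! \<theta> i"
  unfolding list_act_def by (simp del: upt_Suc)

lemma mono_op_le: "mono_op m n \<theta> \<Longrightarrow> i \<le> m \<Longrightarrow> \<theta> i \<le> n"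
  unfolding mono_op_def by blast

lemma set_list_act:
  assumes "length xs = Suc n" "mono_op m n \<theta>"
  shows "set (list_act m \<theta> xs) \<subseteq> set xs" "xs ! \<theta> 0 \<in> set (list_act m \<theta> xs)"
proof -
  have "\<theta> i < length xs" if "i \<le> m" for i
    using assms mono_op_le that by fastforce
  then show "set (list_act m \<theta> xs) \<subseteq> set xs" unfolding list_act_def by auto
  show "xs ! \<theta> 0 \<in> set (list_act m \<theta> xs)"
    using nth_mem[of 0 "list_act m \<theta> xs"] by (simp add: nth_list_act)
qed

lemma list_act_comp:
  assumes "mono_op k m \<psi>"
  shows "list_act k (\<theta> \<circ> \<psi>) xs = list_act k \<psi> (list_act m \<theta> xs)"
  by (rule nth_equalityI) (simp_all add: nth_list_act mono_op_le[OF assms])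

lemma list_act_sd_chains:
  assumes cs: "cs \<in> sd_chains n k" and \<theta>: "mono_op m k \<theta>"
  shows "list_act m \<theta> cs \<in> sd_chains n m"
proof -
  have "list_act m \<theta> cs ! i \<noteq> {} \<and> list_act m \<theta> cs ! i \<subseteq> {0..n}" if "i \<le> m" for i
    using that sd_chains_nth[OF cs mono_op_le[OF \<theta>]] by (simp add: nth_list_act)
  then have "\<forall>c\<in>set (list_act m \<theta> cs). c \<noteq> {} \<and> c \<subseteq> {0..n}"
    by (metis in_set_conv_nth length_list_act less_Suc_eq_le)
  moreover have "list_act m \<theta> cs ! i \<subseteq> list_act m \<theta> cs ! j" if "i \<le> j" "j \<le> m" for i j
  proof -
    have "\<theta> i \<le> \<theta> j" "\<theta> j \<le> k" using that \<theta> unfolding mono_op_def by auto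
    then have "cs ! \<theta> i \<subseteq> cs ! \<theta> j" using cs unfolding sd_chains_def by blast
    then show ?thesis using that by (simp add: nth_list_act)
  qed
  ultimately show ?thesis unfolding sd_chains_def by simp
qed

lemma image_sd_chains:
  assumes "cs \<in> sd_chains m k" "mono_op m n \<theta>"
  shows "map (\<lambda>S. \<theta> ` S) cs \<in> sd_chains n k"
  using assms unfolding sd_chains_def mono_op_def
  by (auto simp: image_mono) (metis atLeastAtMost_iff subsetD)

lemma Max_image_mono_op:
  assumes "mono_op m n \<theta>" "S \<subseteq> {0..m}" "S \<noteq> {}"
  shows "Max (\<theta> ` S) = \<theta> (Max S)"
proof (rule Max_eqI)
  have "finite S" using assms(2) finite_subset by blast
  then show "finite (\<theta> ` S)" "\<theta> (Max S) \<in> \<theta> ` S" using assms(3) by auto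
  fix y assume "y \<in> \<theta> ` S"
  then obtain s where "s \<in> S" "y = \<theta> s" by auto
  moreover have "s \<le> Max S" "Max S \<le> m" using \<open>finite S\<close> \<open>s \<in> S\<close> assms(2,3) by auto
  ultimately show "y \<le> \<theta> (Max S)" using assms(1) unfolding mono_op_def by auto
qed

lemma mono_op_Max_sd_chains:
  assumes cs: "cs \<in> sd_chains n k"
  shows "mono_op k n (\<lambda>i. Max (cs ! i))"
  unfolding mono_op_def
proof (intro conjI allI impI)
  fix i assume "i \<le> k"
  then show "Max (cs ! i) \<le> n"
    using Max_le_sd_chains[OF cs] sd_chains_length[OF cs] by simp
next
  fix i j assume ij: "i \<le> j \<and> j \<le> k"
  then have "cs ! i \<subseteq> cs ! j" using cs unfolding sd_chains_def by blast
  moreover have "cs ! i \<noteq> {}" "cs ! j \<subseteq> {0..n}" using ij sd_chains_nth[OF cs] by auto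
  ultimately show "Max (cs ! i) \<le> Max (cs ! j)"
    by (meson Max_mono finite_atLeastAtMost finite_subset)
qed

section \<open>The simplicial sets \<open>Sing K\<close> and \<open>Ex X\<close>\<close>

lemma sset_act_lev: "is_sset X \<Longrightarrow> mono_op m n \<theta> \<Longrightarrow> x \<in> lev X n \<Longrightarrow> act X n m \<theta> x \<in> lev X m"
  unfolding is_sset_def by blast

lemma sset_act_id: "is_sset X \<Longrightarrow> x \<in> lev X n \<Longrightarrow> act X n n id x = x"
  unfolding is_sset_def by blast

lemma sset_act_cong:
  "is_sset X \<Longrightarrow> mono_op m n \<theta> \<Longrightarrow> x \<in> lev X n \<Longrightarrow> (\<And>i. i \<le> m \<Longrightarrow> \<theta> i = \<theta>' i)
   \<Longrightarrow> act X n m \<theta> x = act X n m \<theta>' x"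
  unfolding is_sset_def by blast

lemma sset_act_comp:
  "is_sset X \<Longrightarrow> mono_op m n \<theta> \<Longrightarrow> mono_op k m \<psi> \<Longrightarrow> x \<in> lev X n
   \<Longrightarrow> act X n k (\<theta> \<circ> \<psi>) x = act X m k \<psi> (act X n m \<theta> x)"
  unfolding is_sset_def by blast

lemma lev_Ex:
  "(n', g) \<in> lev (Ex X) n \<longleftrightarrow> n' = n \<and> g \<in> extensional (sd_all n) \<and>
     (\<forall>k cs. cs \<in> sd_chains n k \<longrightarrow> g cs \<in> lev X k) \<and>
     (\<forall>k m \<theta> cs. cs \<in> sd_chains n k \<and> mono_op m k \<theta> \<longrightarrow>
        g (list_act m \<theta> cs) = act X k m \<theta> (g cs))"
  by (simp add: Ex_def)

lemma act_Ex: "act (Ex X) n m \<theta> (n', g) = (m, restrict (\<lambda>cs. g (map ((`) \<theta>) cs)) (sd_all m))"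
  by (simp add: Ex_def)

lemma Ex_map_pair: "Ex_map f (n, g) = (n, restrict (f \<circ> g) (sd_all n))"
  by (simp add: Ex_map_def)

lemma lev_ExI:
  "g \<in> extensional (sd_all n) \<Longrightarrow> (\<And>k cs. cs \<in> sd_chains n k \<Longrightarrow> g cs \<in> lev X k) \<Longrightarrow>
   (\<And>k m \<theta> cs. cs \<in> sd_chains n k \<Longrightarrow> mono_op m k \<theta> \<Longrightarrow> g (list_act m \<theta> cs) = act X k m \<theta> (g cs))
   \<Longrightarrow> (n, g) \<in> lev (Ex X) n"
  by (simp add: Ex_def)

lemma lev_Sing: "xs \<in> lev (Sing K) n \<longleftrightarrow> length xs = Suc n \<and> set xs \<in> snd K"
  by (simp add: Sing_def)

lemma act_Sing: "act (Sing K) n m \<theta> xs = list_act m \<theta> xs"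
  by (simp add: Sing_def)

lemma map_list_act:
  assumes "mono_op m n \<theta>" "length xs = Suc n"
  shows "map f (list_act m \<theta> xs) = list_act m \<theta> (map f xs)"
  using assms mono_op_le[OF assms(1)] by (auto simp: list_act_def less_Suc_eq_le)

lemma is_sset_Sing:
  assumes K: "is_cpx K"
  shows "is_sset (Sing K)"
  unfolding is_sset_def
proof (intro conjI allI impI)
  fix m n :: nat assume "m \<noteq> n"
  then show "lev (Sing K) m \<inter> lev (Sing K) n = {}" by (auto simp: lev_Sing)
next
  fix n m \<theta> xs assume "mono_op m n \<theta> \<and> xs \<in> lev (Sing K) n"
  then have \<theta>: "mono_op m n \<theta>" and xs: "length xs = Suc n" "set xs \<in> snd K" by (auto simp: lev_Sing)
  have "set (list_act m \<theta> xs) \<in> snd K"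
    using is_cpx_face[OF K xs(2)] set_list_act[OF xs(1) \<theta>] by blast
  then show "act (Sing K) n m \<theta> xs \<in> lev (Sing K) m" by (simp add: lev_Sing act_Sing)
next
  fix n xs assume "xs \<in> lev (Sing K) n"
  then show "act (Sing K) n n id xs = xs"
    by (intro nth_equalityI) (simp_all add: lev_Sing act_Sing nth_list_act)
next
  fix n m \<theta> \<theta>' xs assume "mono_op m n \<theta> \<and> xs \<in> lev (Sing K) n \<and> (\<forall>i\<le>m. \<theta> i = \<theta>' i)"
  then show "act (Sing K) n m \<theta> xs = act (Sing K) n m \<theta>' xs"
    by (intro nth_equalityI) (simp_all add: act_Sing nth_list_act)
next
  fix n m k \<theta> \<psi> xs assume "mono_op m n \<theta> \<and> mono_op k m \<psi> \<and> xs \<in> lev (Sing K) n"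
  then show "act (Sing K) n k (\<theta> \<circ> \<psi>) xs = act (Sing K) m k \<psi> (act (Sing K) n m \<theta> xs)"
    by (simp add: act_Sing list_act_comp)
qed

lemma act_Ex_lev:
  assumes \<theta>: "mono_op m n \<theta>" and y: "y \<in> lev (Ex X) n"
  shows "act (Ex X) n m \<theta> y \<in> lev (Ex X) m"
proof -
  obtain g where y_def: "y = (n, g)" and g: "(n, g) \<in> lev (Ex X) n" using y by (cases y) (auto simp: lev_Ex)
  let ?g' = "restrict (\<lambda>cs. g (map ((`) \<theta>) cs)) (sd_all m)"
  have img: "map ((`) \<theta>) cs \<in> sd_chains n k" if "cs \<in> sd_chains m k" for cs k
    using image_sd_chains[OF that \<theta>] .
  have "(m, ?g') \<in> lev (Ex X) m"
  proof (rule lev_ExI)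
    fix k cs assume "cs \<in> sd_chains m k"
    then show "?g' cs \<in> lev X k" using g img by (simp add: lev_Ex sd_all_if_sd_chains)
  next
    fix k m' \<phi> cs assume cs: "cs \<in> sd_chains m k" and \<phi>: "mono_op m' k \<phi>"
    have "map ((`) \<theta>) (list_act m' \<phi> cs) = list_act m' \<phi> (map ((`) \<theta>) cs)"
      using map_list_act[OF \<phi> sd_chains_length[OF cs]] .
    then show "?g' (list_act m' \<phi> cs) = act X k m' \<phi> (?g' cs)"
      using g img[OF cs] cs \<phi> list_act_sd_chains[OF cs \<phi>] by (simp add: lev_Ex sd_all_if_sd_chains)
  qed simp
  then show ?thesis by (simp add: y_def act_Ex)
qed

lemma is_sset_Ex: "is_sset (Ex X)"
  unfolding is_sset_def
proof (intro conjI allI impI)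
  fix m n :: nat assume "m \<noteq> n"
  then show "lev (Ex X) m \<inter> lev (Ex X) n = {}" by (auto simp: Ex_def)
next
  fix n m \<theta> y assume "mono_op m n \<theta> \<and> y \<in> lev (Ex X) n"
  then show "act (Ex X) n m \<theta> y \<in> lev (Ex X) m" using act_Ex_lev by blast
next
  fix n y assume y: "y \<in> lev (Ex X) n"
  then obtain g where "y = (n, g)" "g \<in> extensional (sd_all n)" by (cases y) (auto simp: lev_Ex)
  then show "act (Ex X) n n id y = y" by (auto simp: act_Ex extensional_restrict)
next
  fix n m \<theta> \<theta>' y assume H: "mono_op m n \<theta> \<and> y \<in> lev (Ex X) n \<and> (\<forall>i\<le>m. \<theta> i = \<theta>' i)"
  obtain g where y_def: "y = (n, g)" using H by (cases y) (auto simp: lev_Ex)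
  have "\<theta> ` S = \<theta>' ` S" if "cs \<in> sd_all m" "S \<in> set cs" for cs S
  proof -
    have "S \<subseteq> {0..m}" using sd_chains_set that sd_all_iff by blast
    then show ?thesis using H by (intro image_cong) auto
  qed
  then have images: "map ((`) \<theta>) cs = map ((`) \<theta>') cs" if "cs \<in> sd_all m" for cs
    using that by simp
  show "act (Ex X) n m \<theta> y = act (Ex X) n m \<theta>' y"
    unfolding y_def act_Ex by (intro arg_cong[where f = "Pair m"] restrict_ext) (metis images)
next
  fix n m k \<theta> \<psi> y assume H: "mono_op m n \<theta> \<and> mono_op k m \<psi> \<and> y \<in> lev (Ex X) n"
  obtain g where y_def: "y = (n, g)" using H by (cases y) (auto simp: lev_Ex)
  have "map ((`) \<psi>) cs \<in> sd_all m" if "cs \<in> sd_all k" for cs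
    using H image_sd_chains sd_all_iff that by (metis length_map)
  then show "act (Ex X) n k (\<theta> \<circ> \<psi>) y = act (Ex X) m k \<psi> (act (Ex X) n m \<theta> y)"
    by (auto simp: y_def act_Ex comp_def image_image intro!: restrict_ext)
qed

lemma smap_Sing_map:
  assumes "cmap K L f"
  shows "smap (Sing K) (Sing L) (Sing_map f)"
  unfolding smap_def
proof (intro allI impI conjI)
  fix n xs assume "xs \<in> lev (Sing K) n"
  then have xs: "length xs = Suc n" "set xs \<in> snd K" by (auto simp: lev_Sing)
  then show "Sing_map f xs \<in> lev (Sing L) n"
    using assms unfolding cmap_def by (simp add: lev_Sing Sing_map_def)
  show "Sing_map f (act (Sing K) n m \<theta> xs) = act (Sing L) n m \<theta> (Sing_map f xs)" if "mono_op m n \<theta>" for m \<theta>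
    using map_list_act[OF that xs(1)] by (simp add: act_Sing Sing_map_def)
qed

lemma smap_Ex_map:
  assumes f: "smap X Y f"
  shows "smap (Ex X) (Ex Y) (Ex_map f)"
  unfolding smap_def
proof (intro allI impI conjI)
  fix n y assume y: "y \<in> lev (Ex X) n"
  then obtain g where y_def: "y = (n, g)" and g: "(n, g) \<in> lev (Ex X) n" by (cases y) (auto simp: lev_Ex)
  have "(n, restrict (f \<circ> g) (sd_all n)) \<in> lev (Ex Y) n"
  proof (rule lev_ExI)
    fix k cs assume "cs \<in> sd_chains n k"
    then show "restrict (f \<circ> g) (sd_all n) cs \<in> lev Y k"
      using f g unfolding smap_def by (simp add: lev_Ex sd_all_if_sd_chains)
  next
    fix k m \<theta> cs assume cs: "cs \<in> sd_chains n k" and \<theta>: "mono_op m k \<theta>"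
    then have "g cs \<in> lev X k" "g (list_act m \<theta> cs) = act X k m \<theta> (g cs)" using g by (simp_all add: lev_Ex)
    then show "restrict (f \<circ> g) (sd_all n) (list_act m \<theta> cs) = act Y k m \<theta> (restrict (f \<circ> g) (sd_all n) cs)"
      using f \<theta> cs list_act_sd_chains[OF cs \<theta>] unfolding smap_def by (simp add: sd_all_if_sd_chains)
  qed simp
  then show "Ex_map f y \<in> lev (Ex Y) n" by (simp add: y_def Ex_map_pair)
  show "Ex_map f (act (Ex X) n m \<theta> y) = act (Ex Y) n m \<theta> (Ex_map f y)" if "mono_op m n \<theta>" for m \<theta>
  proof -
    have "map ((`) \<theta>) cs \<in> sd_all n" if "cs \<in> sd_all m" for cs
      using \<open>mono_op m n \<theta>\<close> image_sd_chains sd_all_iff that by (metis length_map)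
    then show ?thesis by (auto simp: y_def act_Ex Ex_map_pair intro!: restrict_ext)
  qed
qed

section \<open>The last-vertex map and the top flag\<close>

text \<open>The last-vertex map \<open>sd \<Delta>\<^sup>n \<rightarrow> \<Delta>\<^sup>n\<close>, sending a vertex \<open>S \<subseteq> [n]\<close> of the subdivision
  to \<open>Max S\<close>, induces the natural map \<open>X \<rightarrow> Ex X\<close>.\<close>
definition Ex_unit :: "'a sset \<Rightarrow> nat \<Rightarrow> 'a \<Rightarrow> nat \<times> (nat set list \<Rightarrow> 'a)" where
  "Ex_unit X n x = (n, restrict (\<lambda>cs. act X n (length cs - 1) (\<lambda>i. Max (cs ! i)) x) (sd_all n))"

lemma Ex_unit_lev:
  assumes X: "is_sset X" and x: "x \<in> lev X n"
  shows "Ex_unit X n x \<in> lev (Ex X) n"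
  unfolding Ex_unit_def
proof (rule lev_ExI)
  let ?u = "restrict (\<lambda>cs. act X n (length cs - 1) (\<lambda>i. Max (cs ! i)) x) (sd_all n)"
  fix k cs assume cs: "cs \<in> sd_chains n k"
  then show "?u cs \<in> lev X k"
    using sset_act_lev[OF X mono_op_Max_sd_chains[OF cs] x]
    by (simp add: sd_all_if_sd_chains sd_chains_length)
next
  let ?u = "restrict (\<lambda>cs. act X n (length cs - 1) (\<lambda>i. Max (cs ! i)) x) (sd_all n)"
  fix k m \<theta> cs assume cs: "cs \<in> sd_chains n k" and \<theta>: "mono_op m k \<theta>"
  have la: "list_act m \<theta> cs \<in> sd_chains n m" using list_act_sd_chains[OF cs \<theta>] .
  have "?u (list_act m \<theta> cs) = act X n m (\<lambda>i. Max (list_act m \<theta> cs ! i)) x"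
    using la by (simp add: sd_all_if_sd_chains)
  also have "\<dots> = act X n m ((\<lambda>i. Max (cs ! i)) \<circ> \<theta>) x"
    by (rule sset_act_cong[OF X mono_op_Max_sd_chains[OF la] x]) (simp add: nth_list_act)
  also have "\<dots> = act X k m \<theta> (act X n k (\<lambda>i. Max (cs ! i)) x)"
    by (rule sset_act_comp[OF X mono_op_Max_sd_chains[OF cs] \<theta> x])
  also have "\<dots> = act X k m \<theta> (?u cs)"
    using cs by (simp add: sd_all_if_sd_chains sd_chains_length)
  finally show "?u (list_act m \<theta> cs) = act X k m \<theta> (?u cs)" .
qed simp

lemma act_Ex_unit:
  assumes X: "is_sset X" and \<theta>: "mono_op m n \<theta>" and x: "x \<in> lev X n"
  shows "act (Ex X) n m \<theta> (Ex_unit X n x) = Ex_unit X m (act X n m \<theta> x)"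
proof -
  have "act X n k (\<lambda>i. Max (map ((`) \<theta>) cs ! i)) x = act X m k (\<lambda>i. Max (cs ! i)) (act X n m \<theta> x)"
    if cs: "cs \<in> sd_chains m k" for cs k
  proof -
    have img: "map ((`) \<theta>) cs \<in> sd_chains n k" using image_sd_chains[OF cs \<theta>] .
    have "act X n k (\<lambda>i. Max (map ((`) \<theta>) cs ! i)) x = act X n k (\<theta> \<circ> (\<lambda>i. Max (cs ! i))) x"
    proof (rule sset_act_cong[OF X mono_op_Max_sd_chains[OF img] x])
      fix i assume "i \<le> k"
      then show "Max (map ((`) \<theta>) cs ! i) = (\<theta> \<circ> (\<lambda>i. Max (cs ! i))) i"
        using Max_image_mono_op[OF \<theta>] sd_chains_nth[OF cs] sd_chains_length[OF cs] by simp
    qed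
    also have "\<dots> = act X m k (\<lambda>i. Max (cs ! i)) (act X n m \<theta> x)"
      by (rule sset_act_comp[OF X \<theta> mono_op_Max_sd_chains[OF cs] x])
    finally show ?thesis .
  qed
  moreover have "map ((`) \<theta>) cs \<in> sd_all n" if "cs \<in> sd_all m" for cs
    using \<theta> image_sd_chains sd_all_iff that by (metis length_map)
  ultimately show ?thesis
    unfolding Ex_unit_def act_Ex by (auto simp: sd_all_iff intro!: restrict_ext)
qed

lemma Ex_map_Ex_unit:
  assumes f: "smap X Y f" and x: "x \<in> lev X n"
  shows "Ex_map f (Ex_unit X n x) = Ex_unit Y n (f x)"
proof -
  have "f (act X n (length cs - 1) (\<lambda>i. Max (cs ! i)) x) = act Y n (length cs - 1) (\<lambda>i. Max (cs ! i)) (f x)"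
    if "cs \<in> sd_all n" for cs
    using f x mono_op_Max_sd_chains that unfolding smap_def sd_all_iff by blast
  then show ?thesis unfolding Ex_unit_def Ex_map_pair by (auto intro!: restrict_ext)
qed

definition flag :: "nat \<Rightarrow> nat set list" where
  "flag n = map (\<lambda>i. {0..i}) [0..<Suc n]"

lemma length_flag [simp]: "length (flag n) = Suc n"
  unfolding flag_def by simp

lemma nth_flag: "i \<le> n \<Longrightarrow> flag n ! i = {0..i}"
  unfolding flag_def by (simp del: upt_Suc)

lemma flag_sd_chains: "flag n \<in> sd_chains n n"
  unfolding sd_chains_def by (auto simp: nth_flag) (auto simp: flag_def)

definition Ex_flag :: "nat \<Rightarrow> nat \<times> (nat set list \<Rightarrow> 'a) \<Rightarrow> 'a" where
  "Ex_flag n y = snd y (flag n)"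

lemma Ex_flag_lev: "y \<in> lev (Ex X) n \<Longrightarrow> Ex_flag n y \<in> lev X n"
  using flag_sd_chains by (cases y) (simp add: Ex_flag_def lev_Ex)

lemma Ex_flag_Ex_map: "y \<in> lev (Ex X) n \<Longrightarrow> Ex_flag n (Ex_map f y) = f (Ex_flag n y)"
  using sd_all_if_sd_chains[OF flag_sd_chains] by (cases y) (simp add: Ex_flag_def lev_Ex Ex_map_pair)

lemma Ex_flag_Ex_unit:
  assumes X: "is_sset X" and x: "x \<in> lev X n"
  shows "Ex_flag n (Ex_unit X n x) = x"
proof -
  have "act X n n (\<lambda>i. Max (flag n ! i)) x = act X n n id x"
    by (rule sset_act_cong[OF X mono_op_Max_sd_chains[OF flag_sd_chains] x])
      (auto simp: nth_flag intro!: Max_eqI)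
  then show ?thesis
    using sd_all_if_sd_chains[OF flag_sd_chains] sset_act_id[OF X x]
    by (simp add: Ex_flag_def Ex_unit_def)
qed

lemma mono_op_coface: "i \<le> Suc n \<Longrightarrow> mono_op n (Suc n) (coface i)"
  unfolding mono_op_def coface_def by auto

lemma Ex_flag_last_face:
  assumes y: "y \<in> lev (Ex X) (Suc n)"
  shows "Ex_flag n (face (Ex X) (Suc n) (Suc n) y) = face X (Suc n) (Suc n) (Ex_flag (Suc n) y)"
proof -
  obtain g where y_def: "y = (Suc n, g)" and g: "(Suc n, g) \<in> lev (Ex X) (Suc n)"
    using y by (cases y) (auto simp: lev_Ex)
  have "map ((`) (coface (Suc n))) (flag n) = flag n"
    by (intro nth_equalityI) (auto simp: nth_flag coface_def)
  moreover have "list_act n (coface (Suc n)) (flag (Suc n)) = flag n"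
    by (intro nth_equalityI) (auto simp: nth_list_act nth_flag coface_def)
  moreover have "g (list_act n (coface (Suc n)) (flag (Suc n))) =
      act X (Suc n) n (coface (Suc n)) (g (flag (Suc n)))"
    using g flag_sd_chains mono_op_coface[of "Suc n" n] unfolding lev_Ex by blast
  ultimately show ?thesis
    using sd_all_if_sd_chains[OF flag_sd_chains] by (simp add: y_def Ex_flag_def face_def act_Ex)
qed

abbreviation Ex2_unit :: "'a sset \<Rightarrow> nat \<Rightarrow> 'a \<Rightarrow> nat \<times> (nat set list \<Rightarrow> nat \<times> (nat set list \<Rightarrow> 'a))" where
  "Ex2_unit X n x \<equiv> Ex_unit (Ex X) n (Ex_unit X n x)"

abbreviation Ex2_flag :: "nat \<Rightarrow> nat \<times> (nat set list \<Rightarrow> nat \<times> (nat set list \<Rightarrow> 'a)) \<Rightarrow> 'a" where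
  "Ex2_flag n z \<equiv> Ex_flag n (Ex_flag n z)"

lemma Ex2_unit_lev: "is_sset X \<Longrightarrow> x \<in> lev X n \<Longrightarrow> Ex2_unit X n x \<in> lev (Ex (Ex X)) n"
  by (intro Ex_unit_lev is_sset_Ex)

lemma act_Ex2_unit:
  "is_sset X \<Longrightarrow> mono_op m n \<theta> \<Longrightarrow> x \<in> lev X n \<Longrightarrow>
   act (Ex (Ex X)) n m \<theta> (Ex2_unit X n x) = Ex2_unit X m (act X n m \<theta> x)"
  by (simp add: act_Ex_unit is_sset_Ex Ex_unit_lev)

lemma Ex_map_Ex2_unit:
  assumes X: "is_sset X" and f: "smap X Y f" and x: "x \<in> lev X n"
  shows "Ex_map (Ex_map f) (Ex2_unit X n x) = Ex2_unit Y n (f x)"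
  using Ex_map_Ex_unit[OF smap_Ex_map[OF f] Ex_unit_lev[OF X x]] Ex_map_Ex_unit[OF f x] by simp

lemma Ex2_flag_Ex2_unit: "is_sset X \<Longrightarrow> x \<in> lev X n \<Longrightarrow> Ex2_flag n (Ex2_unit X n x) = x"
  by (simp add: Ex_flag_Ex_unit is_sset_Ex Ex_unit_lev)

lemma Ex2_flag_Ex_map:
  assumes "z \<in> lev (Ex (Ex X)) n"
  shows "Ex2_flag n (Ex_map (Ex_map f) z) = f (Ex2_flag n z)"
  using Ex_flag_Ex_map[OF assms, where f = "Ex_map f"] Ex_flag_Ex_map[OF Ex_flag_lev[OF assms], where f = f]
  by (simp only:)

lemma Ex2_flag_last_face:
  "z \<in> lev (Ex (Ex X)) (Suc n) \<Longrightarrow>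
   Ex2_flag n (face (Ex (Ex X)) (Suc n) (Suc n) z) = face X (Suc n) (Suc n) (Ex2_flag (Suc n) z)"
  by (simp add: Ex_flag_last_face Ex_flag_lev)

section \<open>Trivial fibrations lift edges\<close>

definition lifts_edges :: "'e cpx \<Rightarrow> 'b cpx \<Rightarrow> ('e \<Rightarrow> 'b) \<Rightarrow> bool" where
  "lifts_edges E B p \<longleftrightarrow> (\<forall>e\<in>fst E. \<forall>b. {p e, b} \<in> snd B \<longrightarrow> (\<exists>v. {e, v} \<in> snd E \<and> p v = b))"

lemma thomason_fib_lifts_edges:
  assumes E: "is_cpx E" and B: "is_cpx B" and p: "cmap E B p" and fib: "thomason_fib E B p"
  shows "lifts_edges E B p"
  unfolding lifts_edges_def
proof (intro ballI allI impI)
  fix e b assume e: "e \<in> fst E" and edge: "{p e, b} \<in> snd B"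
  let ?P = "Ex_map (Ex_map (Sing_map p))"
  have SE: "is_sset (Sing E)" and SB: "is_sset (Sing B)" using E B by (simp_all add: is_sset_Sing)
  have sp: "smap (Sing E) (Sing B) (Sing_map p)" using p by (rule smap_Sing_map)
  have coface: "mono_op 0 1 (coface 1)" unfolding mono_op_def coface_def by auto
  have eb_lev: "[p e, b] \<in> lev (Sing B) 1" using edge by (simp add: lev_Sing)
  have e_lev: "[e] \<in> lev (Sing E) 0" using is_cpx_vertex[OF E e] by (simp add: lev_Sing)
  have "face (Ex (Ex (Sing B))) 1 1 (Ex2_unit (Sing B) 1 [p e, b]) = Ex2_unit (Sing B) 0 [p e]"
    using act_Ex2_unit[OF SB coface eb_lev]
    by (simp add: face_def act_Sing list_act_def coface_def)
  also have "\<dots> = ?P (Ex2_unit (Sing E) 0 [e])"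
    using Ex_map_Ex2_unit[OF SE sp e_lev] by (simp add: Sing_map_def)
  finally have "\<exists>z\<in>lev (Ex (Ex (Sing E))) 1. ?P z = Ex2_unit (Sing B) 1 [p e, b] \<and>
      (\<forall>i\<le>1. i \<noteq> 0 \<longrightarrow> face (Ex (Ex (Sing E))) 1 i z = Ex2_unit (Sing E) 0 [e])"
    using fib[unfolded thomason_fib_def kan_fib_def, THEN conjunct2, rule_format,
        of 1 0 "\<lambda>_. Ex2_unit (Sing E) 0 [e]" "Ex2_unit (Sing B) 1 [p e, b]"]
      Ex2_unit_lev[OF SB eb_lev] Ex2_unit_lev[OF SE e_lev]
    by (auto simp: le_Suc_eq)
  then obtain z where z: "z \<in> lev (Ex (Ex (Sing E))) 1" and Pz: "?P z = Ex2_unit (Sing B) 1 [p e, b]"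
    and face_z: "face (Ex (Ex (Sing E))) 1 1 z = Ex2_unit (Sing E) 0 [e]"
    by auto
  define s where "s = Ex2_flag 1 z"
  have s: "length s = 2" "set s \<in> snd E"
    using Ex_flag_lev[OF Ex_flag_lev[OF z]] by (simp_all add: s_def lev_Sing)
  have "map p s = Ex2_flag 1 (?P z)"
    unfolding s_def Ex2_flag_Ex_map[OF z] by (simp add: Sing_map_def)
  also have "\<dots> = [p e, b]"
    using Pz Ex2_flag_Ex2_unit[OF SB eb_lev] by simp
  finally have "map p s = [p e, b]" .
  moreover have "s ! 0 = e"
    using Ex2_flag_last_face[OF z[unfolded One_nat_def]] face_z Ex2_flag_Ex2_unit[OF SE e_lev]
    by (simp add: s_def face_def act_Sing list_act_def coface_def)
  ultimately show "\<exists>v. {e, v} \<in> snd E \<and> p v = b"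
    using s by (cases s rule: list.exhaust; cases "tl s") auto
qed

section \<open>Trivial fibrations are surjective on vertices\<close>

definition edge_rel :: "'v cpx \<Rightarrow> ('v \<times> 'v) set" where
  "edge_rel K = {(u, v). {u, v} \<in> snd K}"

lemma sym_edge_rel: "sym (edge_rel K)"
  unfolding edge_rel_def sym_def by (simp add: insert_commute)

lemma edge_component_saturated:
  assumes K: "is_cpx K" and \<sigma>: "\<sigma> \<in> snd K" "u \<in> \<sigma>" and u: "u \<in> (edge_rel K)\<^sup>* `` {v\<^sub>0}"
  shows "\<sigma> \<subseteq> (edge_rel K)\<^sup>* `` {v\<^sub>0}"
proof
  fix w assume "w \<in> \<sigma>"
  then have "{u, w} \<in> snd K" using is_cpx_face[OF K \<sigma>(1)] \<sigma>(2) by simp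
  then have "(u, w) \<in> edge_rel K" by (simp add: edge_rel_def)
  with u show "w \<in> (edge_rel K)\<^sup>* `` {v\<^sub>0}" by (simp add: rtrancl_into_rtrancl)
qed

lemma lifts_edges_rtrancl:
  assumes E: "is_cpx E" and lift: "lifts_edges E B p"
    and path: "(b', b) \<in> (edge_rel B)\<^sup>*" and b': "b' \<in> p ` fst E"
  shows "b \<in> p ` fst E"
  using path
proof (induction rule: rtrancl_induct)
  case base
  show ?case using b' .
next
  case (step v w)
  then obtain e where "e \<in> fst E" "p e = v" by blast
  moreover have "{v, w} \<in> snd B" using step(2) by (simp add: edge_rel_def)
  ultimately obtain u where "{e, u} \<in> snd E" "p u = w" using lift unfolding lifts_edges_def by blast
  moreover then have "u \<in> fst E" using is_cpx_simplex_vertices[OF E] by blast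
  ultimately show ?case by blast
qed

lemma openin_quotient_top:
  "openin (quotient_top T R) U \<longleftrightarrow> U \<subseteq> topspace T // R \<and> openin T {y \<in> topspace T. R `` {y} \<in> U}"
proof -
  let ?L = "\<lambda>U. U \<subseteq> topspace T // R \<and> openin T {y \<in> topspace T. R `` {y} \<in> U}"
  have "istopology ?L"
    unfolding istopology_def
  proof (rule conjI; intro allI impI)
    fix S S' assume "?L S" "?L S'"
    moreover have "{y \<in> topspace T. R `` {y} \<in> S \<inter> S'} =
        {y \<in> topspace T. R `` {y} \<in> S} \<inter> {y \<in> topspace T. R `` {y} \<in> S'}" by blast
    ultimately show "?L (S \<inter> S')" by auto
  next
    fix K assume K: "\<forall>S\<in>K. ?L S"
    have "{y \<in> topspace T. R `` {y} \<in> \<Union>K} = \<Union>((\<lambda>S. {y \<in> topspace T. R `` {y} \<in> S}) ` K)" by blast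
    moreover have "openin T (\<Union>((\<lambda>S. {y \<in> topspace T. R `` {y} \<in> S}) ` K))"
      using K by (intro openin_Union) auto
    ultimately show "?L (\<Union>K)" using K by auto
  qed
  then have "openin (quotient_top T R) = ?L" unfolding quotient_top_def by (rule topology_inverse')
  then show ?thesis by (rule fun_cong)
qed

lemma topspace_quotient_top: "topspace (quotient_top T R) = topspace T // R"
proof
  show "topspace (quotient_top T R) \<subseteq> topspace T // R"
    using openin_topspace[of "quotient_top T R"] unfolding openin_quotient_top by (rule conjunct1)
  have "{y \<in> topspace T. R `` {y} \<in> topspace T // R} = topspace T"
    using quotientI[of _ "topspace T" R] by blast
  then have "openin (quotient_top T R) (topspace T // R)"
    unfolding openin_quotient_top by simp
  then show "topspace T // R \<subseteq> topspace (quotient_top T R)"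
    by (rule openin_subset)
qed

lemma openin_real_base_simplices:
  "openin (real_base X) {y \<in> topspace (real_base X). Pr (fst (snd y))}"
  unfolding real_base_def openin_sum_topology
proof (intro conjI ballI)
  fix i :: nat
  let ?S = "subtopology (powertop_real UNIV) (standard_simplex i)"
  have "{x. (i, x) \<in> {y \<in> topspace (sum_topology (\<lambda>n. prod_topology (discrete_topology (lev X n))
            (subtopology (powertop_real UNIV) (standard_simplex n))) UNIV). Pr (fst (snd y))}}
        = {xs \<in> lev X i. Pr xs} \<times> topspace ?S" by auto
  moreover have "openin (prod_topology (discrete_topology (lev X i)) ?S) ({xs \<in> lev X i. Pr xs} \<times> topspace ?S)"
    unfolding openin_prod_Times_iff using openin_topspace[of ?S] by auto
  ultimately show "openin (prod_topology (discrete_topology (lev X i)) ?S)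
     {x. (i, x) \<in> {y \<in> topspace (sum_topology (\<lambda>n. prod_topology (discrete_topology (lev X n))
            (subtopology (powertop_real UNIV) (standard_simplex n))) UNIV). Pr (fst (snd y))}}" by simp
qed auto

lemma openin_realize_saturated:
  assumes inv: "\<And>z z'. (z, z') \<in> real_eq X \<Longrightarrow> Pr (fst (snd z)) = Pr (fst (snd z'))"
  shows "openin (realize X) {U \<in> topspace (realize X). \<forall>z\<in>U. Pr (fst (snd z))}"
proof -
  let ?T = "real_base X" and ?R = "real_eq X"
  let ?W = "{U \<in> topspace ?T // ?R. \<forall>z\<in>U. Pr (fst (snd z))}"
  have "?R `` {y} \<in> ?W \<longleftrightarrow> Pr (fst (snd y))" if "y \<in> topspace ?T" for y
  proof -
    have "(y, y) \<in> ?R" unfolding real_eq_def by simp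
    then have "(\<forall>z\<in>?R `` {y}. Pr (fst (snd z))) \<longleftrightarrow> Pr (fst (snd y))" using inv by blast
    moreover have "?R `` {y} \<in> topspace ?T // ?R" using that by (rule quotientI)
    ultimately show ?thesis by simp
  qed
  then have "{y \<in> topspace ?T. ?R `` {y} \<in> ?W} = {y \<in> topspace ?T. Pr (fst (snd y))}" by blast
  moreover have "openin ?T {y \<in> topspace ?T. Pr (fst (snd y))}" by (rule openin_real_base_simplices)
  ultimately have "openin (quotient_top ?T ?R) ?W" unfolding openin_quotient_top by simp
  then show ?thesis unfolding realize_def topspace_quotient_top .
qed

lemma closedin_realize_saturated:
  assumes inv: "\<And>z z'. (z, z') \<in> real_eq X \<Longrightarrow> Pr (fst (snd z)) = Pr (fst (snd z'))"
  shows "closedin (realize X) {U \<in> topspace (realize X). \<forall>z\<in>U. Pr (fst (snd z))}"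
proof -
  have dichotomy: "(\<forall>z\<in>U. \<not> Pr (fst (snd z))) \<longleftrightarrow> \<not> (\<forall>z\<in>U. Pr (fst (snd z)))"
    if U_top: "U \<in> topspace (realize X)" for U
  proof -
    have "U \<in> topspace (real_base X) // real_eq X"
      using U_top unfolding realize_def topspace_quotient_top .
    then obtain y where U: "U = real_eq X `` {y}" by (rule quotientE)
    have "y \<in> U" unfolding U real_eq_def by simp
    moreover have "Pr (fst (snd z)) = Pr (fst (snd y))" if "z \<in> U" for z
      using inv[of y z] that unfolding U by simp
    ultimately show ?thesis by metis
  qed
  have "topspace (realize X) - {U \<in> topspace (realize X). \<forall>z\<in>U. Pr (fst (snd z))} =
      {U \<in> topspace (realize X). \<forall>z\<in>U. \<not> Pr (fst (snd z))}"
    unfolding set_eq_iff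
  proof
    fix U show "U \<in> topspace (realize X) - {U \<in> topspace (realize X). \<forall>z\<in>U. Pr (fst (snd z))} \<longleftrightarrow>
        U \<in> {U \<in> topspace (realize X). \<forall>z\<in>U. \<not> Pr (fst (snd z))}"
      by (cases "U \<in> topspace (realize X)") (simp_all add: dichotomy)
  qed
  moreover have "openin (realize X) {U \<in> topspace (realize X). \<forall>z\<in>U. \<not> Pr (fst (snd z))}"
    using inv by (intro openin_realize_saturated) blast
  ultimately show ?thesis unfolding closedin_def by simp
qed

lemma real_eq_Sing_saturated:
  assumes sat: "\<And>\<sigma> u. \<sigma> \<in> snd K \<Longrightarrow> u \<in> \<sigma> \<Longrightarrow> u \<in> C \<Longrightarrow> \<sigma> \<subseteq> C"
    and zz': "(z, z') \<in> real_eq (Sing K)"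
  shows "set (fst (snd z)) \<subseteq> C \<longleftrightarrow> set (fst (snd z')) \<subseteq> C"
proof -
  have rel_step: "set (fst (snd a)) \<subseteq> C \<longleftrightarrow> set (fst (snd b)) \<subseteq> C"
    if ab: "(a, b) \<in> real_rel (Sing K)" for a b
  proof -
    obtain n m \<theta> xs t where ab: "a = (m, (act (Sing K) n m \<theta> xs, t))" "b = (n, (xs, simplex_push m \<theta> t))"
      and \<theta>: "mono_op m n \<theta>" and xs: "xs \<in> lev (Sing K) n"
      using ab unfolding real_rel_def by blast
    have len: "length xs = Suc n" and xs_simplex: "set xs \<in> snd K" using xs by (simp_all add: lev_Sing)
    note sub = set_list_act[OF len \<theta>]
    have "set (list_act m \<theta> xs) \<subseteq> C \<longleftrightarrow> set xs \<subseteq> C"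
    proof
      assume "set (list_act m \<theta> xs) \<subseteq> C"
      moreover have "xs ! \<theta> 0 \<in> set xs" using sub by (rule subsetD)
      ultimately have "xs ! \<theta> 0 \<in> set xs" "xs ! \<theta> 0 \<in> C" using sub(2) by auto
      then show "set xs \<subseteq> C" by (rule sat[OF xs_simplex])
    next
      assume "set xs \<subseteq> C"
      then show "set (list_act m \<theta> xs) \<subseteq> C" using sub(1) by (rule order_trans[rotated])
    qed
    then show ?thesis unfolding ab act_Sing by simp
  qed
  show ?thesis
    using zz' unfolding real_eq_def
  proof (induction rule: rtrancl_induct)
    case (step y y')
    then have "(y, y') \<in> real_rel (Sing K) \<or> (y', y) \<in> real_rel (Sing K)" by blast
    then have "set (fst (snd y)) \<subseteq> C \<longleftrightarrow> set (fst (snd y')) \<subseteq> C" by (metis rel_step)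
    then show ?case using step.IH by simp
  qed simp
qed

lemma path_component_realize_Sing:
  assumes K: "is_cpx K"
    and pc: "path_component_of (realize (Sing K)) U (real_eq (Sing K) `` {(0, ([v\<^sub>0], t))})"
    and z: "z \<in> U"
  shows "set (fst (snd z)) \<subseteq> (edge_rel K)\<^sup>* `` {v\<^sub>0}"
proof -
  let ?C = "(edge_rel K)\<^sup>* `` {v\<^sub>0}"
  let ?V = "real_eq (Sing K) `` {(0, ([v\<^sub>0], t))}"
  define P where "P xs \<longleftrightarrow> set xs \<subseteq> ?C" for xs :: "'a list"
  let ?W = "{U \<in> topspace (realize (Sing K)). \<forall>z\<in>U. P (fst (snd z))}"
  have "\<And>\<sigma> u. \<sigma> \<in> snd K \<Longrightarrow> u \<in> \<sigma> \<Longrightarrow> u \<in> ?C \<Longrightarrow> \<sigma> \<subseteq> ?C"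
    by (rule edge_component_saturated[OF K])
  then have inv: "P (fst (snd z)) = P (fst (snd z'))" if "(z, z') \<in> real_eq (Sing K)" for z z'
    unfolding P_def using that by (rule real_eq_Sing_saturated)
  have "openin (realize (Sing K)) ?W" using inv by (rule openin_realize_saturated)
  moreover have "closedin (realize (Sing K)) ?W" using inv by (rule closedin_realize_saturated)
  moreover have "connectedin (realize (Sing K)) (path_component_of_set (realize (Sing K)) ?V)"
    by (rule path_connectedin_imp_connectedin[OF path_connectedin_path_component_of])
  ultimately have cases: "path_component_of_set (realize (Sing K)) ?V \<subseteq> ?W \<or>
      disjnt (path_component_of_set (realize (Sing K)) ?V) ?W"
    by (intro connectedin_clopen_cases)
  have V_top: "?V \<in> topspace (realize (Sing K))"
    using path_component_in_topspace[OF pc] by (rule conjunct2)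
  have "P (fst (snd z'))" if "z' \<in> ?V" for z'
    using inv[of "(0, ([v\<^sub>0], t))" z'] that by (simp add: P_def)
  then have "?V \<in> ?W" using V_top by blast
  moreover have "?V \<in> path_component_of_set (realize (Sing K)) ?V"
    using V_top by (simp add: path_component_of_refl)
  ultimately have "path_component_of_set (realize (Sing K)) ?V \<subseteq> ?W"
    using cases unfolding disjnt_def by blast
  moreover have "U \<in> path_component_of_set (realize (Sing K)) ?V"
    using path_component_of_sym[OF pc] by simp
  ultimately have "U \<in> ?W" by (rule subsetD)
  then show ?thesis using z by (simp add: P_def)
qed

lemma thomason_trivial_fib_vertex_surj:
  assumes tf: "thomason_trivial_fib E B p" and b\<^sub>0: "b\<^sub>0 \<in> fst B"
  shows "b\<^sub>0 \<in> p ` fst E"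
proof -
  have E: "is_cpx E" and B: "is_cpx B" and "cmap E B p" "thomason_fib E B p"
    using tf unfolding thomason_trivial_fib_def by auto
  then have lift: "lifts_edges E B p" by (rule thomason_fib_lifts_edges)
  have weq: "weak_homotopy_equivalence (realize (Sing E)) (realize (Sing B)) (realize_map (Sing B) (map p))"
    using tf unfolding thomason_trivial_fib_def thomason_weq_def sset_weq_def Sing_map_def by blast
  define y\<^sub>0 where "y\<^sub>0 = (0::nat, ([b\<^sub>0], \<lambda>i::nat. if i = 0 then 1 else 0 :: real))"
  have "{b\<^sub>0} \<in> snd B" using is_cpx_vertex[OF B b\<^sub>0] .
  then have "y\<^sub>0 \<in> topspace (real_base (Sing B))"
    by (simp add: y\<^sub>0_def real_base_def lev_Sing standard_simplex_def)
  then have "real_eq (Sing B) `` {y\<^sub>0} \<in> topspace (realize (Sing B))"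
    unfolding realize_def topspace_quotient_top by (rule quotientI)
  then obtain x where x: "x \<in> topspace (realize (Sing E))"
    and pc: "path_component_of (realize (Sing B)) (realize_map (Sing B) (map p) x) (real_eq (Sing B) `` {y\<^sub>0})"
    using weq unfolding weak_homotopy_equivalence_def by blast
  have "x \<in> topspace (real_base (Sing E)) // real_eq (Sing E)"
    using x unfolding realize_def topspace_quotient_top .
  then obtain n xs t where w: "(n, (xs, t)) \<in> topspace (real_base (Sing E))"
    and x_def: "x = real_eq (Sing E) `` {(n, (xs, t))}"
    by (metis prod_cases3 quotientE)
  have xs: "length xs = Suc n" "set xs \<in> snd E" using w by (simp_all add: real_base_def lev_Sing)
  have "(n, (xs, t)) \<in> x" unfolding x_def real_eq_def by simp
  then have "(n, (map p xs, t)) \<in> realize_map (Sing B) (map p) x"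
    unfolding realize_map_def real_eq_def by force
  then have "set (fst (snd (n, (map p xs, t)))) \<subseteq> (edge_rel B)\<^sup>* `` {b\<^sub>0}"
    by (rule path_component_realize_Sing[OF B pc[unfolded y\<^sub>0_def]])
  moreover have "hd xs \<in> set xs" using xs(1) by (cases xs) auto
  ultimately have "(b\<^sub>0, p (hd xs)) \<in> (edge_rel B)\<^sup>*" by auto
  then have "(p (hd xs), b\<^sub>0) \<in> (edge_rel B)\<^sup>*" using sym_edge_rel by (metis sym_rtrancl symD)
  moreover have "hd xs \<in> fst E" using is_cpx_simplex_vertices[OF E xs(2)] \<open>hd xs \<in> set xs\<close> by blast
  ultimately show ?thesis using lifts_edges_rtrancl[OF E lift] by blast
qed

section \<open>Lifting paths\<close>

lemma is_cpx_path_graph: "is_cpx (path_graph n)"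
  unfolding is_cpx_def path_graph_def
proof (intro conjI ballI allI impI)
  fix \<sigma> \<tau> assume \<sigma>: "\<sigma> \<in> snd ({0..n}, {{i} |i. i \<le> n} \<union> {{i, Suc i} |i. i < n})"
    and \<tau>: "\<tau> \<noteq> {} \<and> \<tau> \<subseteq> \<sigma>"
  then consider i where "i \<le> n" "\<sigma> = {i}" | i where "i < n" "\<sigma> = {i, Suc i}" by auto
  then show "\<tau> \<in> snd ({0..n}, {{i} |i. i \<le> n} \<union> {{i, Suc i} |i. i < n})"
  proof cases
    case 1
    then show ?thesis using \<tau> by (auto simp: subset_singleton_iff)
  next
    case 2
    then have "\<tau> = {i} \<or> \<tau> = {Suc i} \<or> \<tau> = {i, Suc i}" using \<tau> by blast
    then show ?thesis using 2 by auto
  qed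
qed auto

lemma is_cpx_K1: "is_cpx K1"
  unfolding is_cpx_def K1_def by auto

lemma is_cpx_empty: "is_cpx empty_cpx"
  unfolding is_cpx_def empty_cpx_def by auto

lemma cmap_path_graph_iff:
  assumes L: "is_cpx L"
  shows "cmap (path_graph n) L f \<longleftrightarrow> (\<forall>i\<le>n. f i \<in> fst L) \<and> (\<forall>i<n. {f i, f (Suc i)} \<in> snd L)"
proof -
  have vertices: "(\<forall>\<sigma>\<in>{{i} |i. i \<le> n}. f ` \<sigma> \<in> snd L) \<longleftrightarrow> (\<forall>i\<le>n. f ` {i} \<in> snd L)"
    by blast
  have edges: "(\<forall>\<sigma>\<in>{{i, Suc i} |i. i < n}. f ` \<sigma> \<in> snd L) \<longleftrightarrow> (\<forall>i<n. f ` {i, Suc i} \<in> snd L)"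
    by blast
  have "cmap (path_graph n) L f \<longleftrightarrow>
      (\<forall>i\<le>n. f i \<in> fst L) \<and> (\<forall>i\<le>n. {f i} \<in> snd L) \<and> (\<forall>i<n. {f i, f (Suc i)} \<in> snd L)"
    unfolding cmap_def path_graph_def fst_conv snd_conv ball_Un vertices edges by auto
  then show ?thesis using is_cpx_vertex[OF L] by blast
qed

lemma cmap_path_graph_reverse:
  assumes L: "is_cpx L" and f: "cmap (path_graph n) L f"
  shows "cmap (path_graph n) L (\<lambda>i. f (n - i))"
proof -
  have "{f (n - i), f (n - Suc i)} \<in> snd L" if "i < n" for i
  proof -
    have "n - i = Suc (n - Suc i)" "n - Suc i < n" using that by auto
    then show ?thesis using f by (simp add: cmap_path_graph_iff[OF L] insert_commute)
  qed
  then show ?thesis using f by (simp add: cmap_path_graph_iff[OF L])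
qed

lemma lifts_edges_lift_path:
  assumes E: "is_cpx E" and B: "is_cpx B" and lift: "lifts_edges E B p"
    and b: "cmap (path_graph n) B b" and e\<^sub>0: "e\<^sub>0 \<in> fst E" "p e\<^sub>0 = b 0"
  shows "\<exists>h. h 0 = e\<^sub>0 \<and> cmap (path_graph n) E h \<and> (\<forall>i\<le>n. p (h i) = b i)"
  using b
proof (induction n)
  case 0
  then show ?case using e\<^sub>0 by (intro exI[of _ "\<lambda>_. e\<^sub>0"]) (simp add: cmap_path_graph_iff[OF E])
next
  case (Suc n)
  then have "cmap (path_graph n) B b" "{b n, b (Suc n)} \<in> snd B" by (simp_all add: cmap_path_graph_iff[OF B])
  moreover obtain h where h: "h 0 = e\<^sub>0" "cmap (path_graph n) E h" "\<forall>i\<le>n. p (h i) = b i"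
    using Suc.IH calculation(1) by blast
  moreover have "h n \<in> fst E" using h(2) by (simp add: cmap_path_graph_iff[OF E])
  ultimately obtain v where v: "{h n, v} \<in> snd E" "p v = b (Suc n)"
    using lift unfolding lifts_edges_def by (metis order_refl)
  then have "v \<in> fst E" using is_cpx_simplex_vertices[OF E] by blast
  then have "cmap (path_graph (Suc n)) E (h(Suc n := v))"
    using h(2) v(1) by (auto simp: cmap_path_graph_iff[OF E] less_Suc_eq le_Suc_eq)
  moreover have "\<forall>i\<le>Suc n. p ((h(Suc n := v)) i) = b i" using h(3) v(2) by (simp add: le_Suc_eq)
  moreover have "(h(Suc n := v)) 0 = e\<^sub>0" using h(1) by simp
  ultimately show ?case by blast
qed

lemma thomason_trivial_fib_lift_path:
  assumes tf: "thomason_trivial_fib E B p" and b: "cmap (path_graph n) B b"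
    and j: "j \<in> {0, n}" and e: "e \<in> fst E" "p e = b j"
  shows "\<exists>h. h j = e \<and> cmap (path_graph n) E h \<and> (\<forall>i\<in>fst (path_graph n). p (h i) = b i)"
proof -
  have E: "is_cpx E" and B: "is_cpx B" and "cmap E B p" "thomason_fib E B p"
    using tf unfolding thomason_trivial_fib_def by auto
  then have lift: "lifts_edges E B p" by (rule thomason_fib_lifts_edges)
  have vertices: "fst (path_graph n) = {..n}" by (auto simp: path_graph_def)
  show ?thesis
  proof (cases "j = 0")
    case True
    then show ?thesis
      using lifts_edges_lift_path[OF E B lift b e[unfolded True]] by (simp add: vertices Ball_def)
  next
    case False
    then have j_n: "j = n" using j by simp
    obtain h where h: "h 0 = e" "cmap (path_graph n) E h" "\<forall>i\<le>n. p (h i) = b (n - i)"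
      using lifts_edges_lift_path[OF E B lift cmap_path_graph_reverse[OF B b]] e[unfolded j_n] by auto
    have "\<forall>i\<in>fst (path_graph n). p (h (n - i)) = b i"
      using h(3) unfolding vertices by (metis atMost_iff diff_diff_cancel diff_le_self)
    then show ?thesis
      using h(1) j_n cmap_path_graph_reverse[OF E h(2)] by (intro exI[of _ "\<lambda>i. h (n - i)"]) simp
  qed
qed

lemma thomason_cofibrant_path_graph: "thomason_cofibrant TYPE('e) TYPE('b) (path_graph n)"
  unfolding thomason_cofibrant_def thomason_cofib_def llp_def
proof (intro conjI allI impI is_cpx_empty is_cpx_path_graph)
  show "cmap empty_cpx (path_graph n) (\<lambda>_. undefined)" by (simp add: cmap_def empty_cpx_def)
  fix E :: "'e cpx" and B :: "'b cpx" and p a and b :: "nat \<Rightarrow> 'b"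
  assume tf: "thomason_trivial_fib E B p"
    and "cmap (empty_cpx :: nat cpx) E a \<and> cmap (path_graph n) B b \<and>
      (\<forall>v\<in>fst (empty_cpx :: nat cpx). p (a v) = b undefined)"
  then have b: "cmap (path_graph n) B b" by blast
  have "b 0 \<in> fst B" using b unfolding cmap_def path_graph_def by simp
  from thomason_trivial_fib_vertex_surj[OF tf this] obtain e where e: "b 0 = p e" "e \<in> fst E"
    by (rule imageE)
  obtain h where h: "cmap (path_graph n) E h" "\<forall>i\<in>fst (path_graph n). p (h i) = b i"
    using thomason_trivial_fib_lift_path[OF tf b insertI1 e(2) e(1)[symmetric]] by blast
  show "\<exists>h. cmap (path_graph n) E h \<and> (\<forall>v\<in>fst (empty_cpx :: nat cpx). h undefined = a v) \<and>
      (\<forall>v\<in>fst (path_graph n). p (h v) = b v)"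
    using h by (intro exI[of _ h]) (simp add: empty_cpx_def)
qed

lemma thomason_cofibrant_K1: "thomason_cofibrant TYPE('e) TYPE('b) K1"
  unfolding thomason_cofibrant_def thomason_cofib_def llp_def
proof (intro conjI allI impI is_cpx_empty is_cpx_K1)
  show "cmap empty_cpx K1 (\<lambda>_. undefined)" by (simp add: cmap_def empty_cpx_def)
  fix E :: "'e cpx" and B :: "'b cpx" and p a and b :: "unit \<Rightarrow> 'b"
  assume tf: "thomason_trivial_fib E B p"
    and "cmap (empty_cpx :: unit cpx) E a \<and> cmap K1 B b \<and>
      (\<forall>v\<in>fst (empty_cpx :: unit cpx). p (a v) = b undefined)"
  then have "b () \<in> fst B" unfolding cmap_def K1_def by simp
  from thomason_trivial_fib_vertex_surj[OF tf this] obtain e where e: "b () = p e" "e \<in> fst E"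
    by (rule imageE)
  have "is_cpx E" using tf unfolding thomason_trivial_fib_def by blast
  then have "cmap K1 E (\<lambda>_. e)" using is_cpx_vertex e(2) unfolding cmap_def K1_def by simp
  then show "\<exists>h. cmap K1 E h \<and> (\<forall>v\<in>fst (empty_cpx :: unit cpx). h undefined = a v) \<and>
      (\<forall>v\<in>fst K1. p (h v) = b v)"
    using e(1) by (intro exI[of _ "\<lambda>_. e"]) (simp add: empty_cpx_def K1_def)
qed

lemma thomason_cofib_K1_path_graph_endpoint:
  assumes j: "j \<in> {0, n}"
  shows "thomason_cofib TYPE('e) TYPE('b) K1 (path_graph n) (\<lambda>_. j)"
  unfolding thomason_cofib_def llp_def
proof (intro conjI allI impI is_cpx_K1 is_cpx_path_graph)
  show "cmap K1 (path_graph n) (\<lambda>_. j)"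
    using j by (auto simp: cmap_def K1_def path_graph_def)
  fix E :: "'e cpx" and B :: "'b cpx" and p a b
  assume tf: "thomason_trivial_fib E B p"
    and H: "cmap K1 E a \<and> cmap (path_graph n) B b \<and> (\<forall>v\<in>fst K1. p (a v) = b j)"
  then have "a () \<in> fst E" "p (a ()) = b j" by (auto simp: cmap_def K1_def)
  then obtain h where h: "h j = a ()" "cmap (path_graph n) E h" "\<forall>i\<in>fst (path_graph n). p (h i) = b i"
    using thomason_trivial_fib_lift_path[OF tf conjunct1[OF conjunct2[OF H]] j] by blast
  show "\<exists>h. cmap (path_graph n) E h \<and> (\<forall>v\<in>fst K1. h j = a v) \<and>
      (\<forall>v\<in>fst (path_graph n). p (h v) = b v)"
    using h by (intro exI[of _ h]) (simp add: K1_def)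
qed

theorem lemma6p6:
  fixes n :: nat
  assumes "1 \<le> n"
  shows "thomason_cofibrant TYPE('e) TYPE('b) (path_graph n) \<and>
         thomason_cofibrant TYPE('e) TYPE('b) K1 \<and>
         thomason_cofib TYPE('e) TYPE('b) K1 (path_graph n) (\<lambda>_. 0) \<and>
         thomason_cofib TYPE('e) TYPE('b) K1 (path_graph n) (\<lambda>_. n)"
  using thomason_cofibrant_path_graph thomason_cofibrant_K1 thomason_cofib_K1_path_graph_endpoint
  by blast

end
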